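(* Let $\Gamma$ be a signed bipartite graph on $n$ vertices with adjacency matrix $\begin{bmatrix} O & M\\ M^{\mathrm T} & O\end{bmatrix}$, where $M$ is a square matrix of order $m=n/2$. Then $\Delta(\Gamma)=2^n\det^2(M)\,\Delta^2(M^{\mathrm T}M)$.
   Context: A signed graph is a simple graph with each edge assigned a sign $\pm1$; its adjacency matrix has entry equal to the edge sign for adjacent vertices and $0$ otherwise. For a monic polynomial $f$ of degree $k$ with roots $\alpha_1,\dots,\alpha_k$ (with multiplicity), the discriminant is $\Delta(f)=\prod_{1\le i<j\le k}(\alpha_i-\alpha_j)^2$. For a square matrix $B$, $\Delta(B)$ is the discriminant of $\det(xI-B)$, and $\Delta(\Gamma)$ is the discriminant of the adjacency matrix of $\Gamma$. *)

theory Defs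
  imports "Jordan_Normal_Form.Char_Poly" "HOL-Computational_Algebra.Fundamental_Theorem_Algebra"
begin

definition poly_roots_list :: "complex poly \<Rightarrow> complex list" where
  "poly_roots_list p = (SOME rs. length rs = degree p \<and>
      p = Polynomial.smult (lead_coeff p) (\<Prod>a\<leftarrow>rs. [:-a, 1:]))"

text \<open>Discriminant of a (monic) polynomial: product over i<j of (alpha_i - alpha_j)^2.\<close>
definition poly_disc :: "complex poly \<Rightarrow> complex" where
  "poly_disc p = (let rs = poly_roots_list p in
      \<Prod>(i,j)\<in>{(i,j). i < j \<and> j < length rs}. (rs ! i - rs ! j)^2)"

definition mat_disc :: "int mat \<Rightarrow> complex" where
  "mat_disc B = poly_disc (map_poly of_int (char_poly B))"

definition signed_adj :: "nat \<Rightarrow> int mat \<Rightarrow> bool" where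
  "signed_adj n A \<longleftrightarrow> A \<in> carrier_mat n n \<and>
     (\<forall>i<n. \<forall>j<n. A $$ (i,j) \<in> {-1,0,1} \<and> A $$ (i,j) = A $$ (j,i)) \<and>
     (\<forall>i<n. A $$ (i,i) = 0)"

end

theory Submission
  imports Defs "Berlekamp_Zassenhaus.Mahler_Measure"
begin

text \<open>A Schur complement computation shows that the characteristic polynomial of
  \<open>[[0, B], [C, 0]]\<close> is \<open>g(x\<^sup>2)\<close>, where \<open>g\<close> is the characteristic polynomial of \<open>C B\<close>.
  Hence if \<open>g\<close> has roots \<open>\<mu>\<^sub>1, ..., \<mu>\<^sub>m\<close>, the block matrix has the roots \<open>\<plusminus>\<surd>\<mu>\<^sub>i\<close>.
  Each pair \<open>\<plusminus>\<surd>\<mu>\<^sub>i\<close> contributes \<open>(2\<surd>\<mu>\<^sub>i)\<^sup>2 = 4\<mu>\<^sub>i\<close> to the discriminant, and the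
  four differences between the pairs for \<open>\<mu>\<^sub>i\<close> and \<open>\<mu>\<^sub>j\<close> multiply to \<open>(\<mu>\<^sub>i - \<mu>\<^sub>j)\<^sup>2\<close>,
  so the discriminant is \<open>4\<^sup>m (\<Prod>\<mu>\<^sub>i) \<Delta>(g)\<^sup>2\<close>. Finally \<open>\<Prod>\<mu>\<^sub>i = det (M\<^sup>T M) = det(M)\<^sup>2\<close>.\<close>

fun disc_roots :: "'a :: comm_ring_1 list \<Rightarrow> 'a" where
  "disc_roots [] = 1"
| "disc_roots (a # rs) = (\<Prod>r\<leftarrow>rs. (a - r)^2) * disc_roots rs"

lemma prod_index_pairs_eq_disc_roots:
  "(\<Prod>(i,j)\<in>{(i,j). i < j \<and> j < length rs}. (rs ! i - rs ! j)^2) = disc_roots rs"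
proof (induction rs)
  case Nil
  then show ?case by simp
next
  case (Cons a rs)
  have pairs: "{(i,j). i < j \<and> j < k} = Sigma {..<k} (\<lambda>i. {Suc i..<k})" for k :: nat
    by auto
  let ?k = "length rs"
  let ?f = "\<lambda>i. \<Prod>j\<in>{Suc i..<Suc ?k}. ((a#rs) ! i - (a#rs) ! j)^2"
  have "(\<Prod>(i,j)\<in>{(i,j). i < j \<and> j < length (a#rs)}. ((a#rs) ! i - (a#rs) ! j)^2)
      = (\<Prod>i<Suc ?k. ?f i)"
    unfolding pairs by (subst prod.Sigma) auto
  also have "\<dots> = ?f 0 * (\<Prod>i<?k. ?f (Suc i))"
    by (rule prod.lessThan_Suc_shift)
  also have "?f 0 = (\<Prod>r\<leftarrow>rs. (a - r)^2)"
  proof -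
    have "?f 0 = (\<Prod>j\<in>Suc ` {0..<?k}. ((a#rs) ! 0 - (a#rs) ! j)^2)"
      by (simp only: image_Suc_atLeastLessThan)
    also have "\<dots> = (\<Prod>j\<in>{0..<?k}. (a - rs ! j)^2)"
      by (subst prod.reindex) auto
    also have "\<dots> = (\<Prod>r\<leftarrow>rs. (a - r)^2)"
      by (subst prod.list_conv_set_nth) simp
    finally show ?thesis .
  qed
  also have "(\<Prod>i<?k. ?f (Suc i)) = (\<Prod>i<?k. \<Prod>j\<in>{Suc i..<?k}. (rs ! i - rs ! j)^2)"
  proof (rule prod.cong[OF refl])
    fix i
    have "?f (Suc i) = (\<Prod>j\<in>Suc ` {Suc i..<?k}. ((a#rs) ! Suc i - (a#rs) ! j)^2)"
      by (simp only: image_Suc_atLeastLessThan)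
    also have "\<dots> = (\<Prod>j\<in>{Suc i..<?k}. (rs ! i - rs ! j)^2)"
      by (subst prod.reindex) auto
    finally show "?f (Suc i) = (\<Prod>j\<in>{Suc i..<?k}. (rs ! i - rs ! j)^2)" .
  qed
  also have "(\<Prod>i<?k. \<Prod>j\<in>{Suc i..<?k}. (rs ! i - rs ! j)^2) = disc_roots rs"
    using Cons.IH unfolding pairs by (subst prod.Sigma) auto
  finally show ?case by simp
qed

lemma disc_roots_append_Cons:
  "disc_roots (us @ a # vs) = (\<Prod>r\<leftarrow>us @ vs. (a - r)^2) * disc_roots (us @ vs)"
proof (induction us)
  case Nil
  then show ?case by simp
next
  case (Cons b us)
  have "disc_roots ((b # us) @ a # vs)
      = (b - a)^2 * (\<Prod>r\<leftarrow>us @ vs. (b - r)^2) * ((\<Prod>r\<leftarrow>us @ vs. (a - r)^2) * disc_roots (us @ vs))"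
    using Cons.IH by simp
  also have "\<dots> = (\<Prod>r\<leftarrow>(b # us) @ vs. (a - r)^2) * disc_roots ((b # us) @ vs)"
    by (simp add: power2_commute[of a b] algebra_simps)
  finally show ?case .
qed

lemma disc_roots_mset_cong: "mset rs = mset ts \<Longrightarrow> disc_roots rs = disc_roots ts"
proof (induction rs arbitrary: ts)
  case Nil
  then show ?case by simp
next
  case (Cons a rs)
  have "a \<in> set ts"
    using mset_eq_setD[OF Cons.prems] by (metis list.set_intros(1))
  then obtain us vs where ts: "ts = us @ a # vs" by (meson split_list)
  with Cons.prems have rs: "mset rs = mset (us @ vs)" by simp
  have "disc_roots (a # rs) = (\<Prod>r\<leftarrow>rs. (a - r)^2) * disc_roots rs"
    by simp
  also have "(\<Prod>r\<leftarrow>rs. (a - r)^2) = (\<Prod>r\<leftarrow>us @ vs. (a - r)^2)"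
    by (simp only: prod_mset_prod_list[symmetric] mset_map rs)
  also have "disc_roots rs = disc_roots (us @ vs)"
    by (rule Cons.IH[OF rs])
  also have "(\<Prod>r\<leftarrow>us @ vs. (a - r)^2) * disc_roots (us @ vs) = disc_roots ts"
    unfolding ts by (rule disc_roots_append_Cons[symmetric])
  finally show ?case .
qed

lemma poly_disc_linear_factors:
  "poly_disc (\<Prod>a\<leftarrow>rs. [:-a, 1:]) = disc_roots rs"
proof -
  let ?p = "\<Prod>a\<leftarrow>rs. [:-a, 1:] :: complex poly"
  let ?roots = "\<lambda>ts. length ts = degree ?p \<and> ?p = Polynomial.smult (lead_coeff ?p) (\<Prod>a\<leftarrow>ts. [:-a, 1:])"
  have monic: "lead_coeff ?p = 1"
    by (rule monic_prod_list) auto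
  have "degree ?p = length rs"
    by (rule degree_linear_factors)
  then have "?roots rs"
    unfolding monic by simp
  then have "?roots (poly_roots_list ?p)"
    unfolding poly_roots_list_def by (rule someI)
  then have "(\<Prod>a\<leftarrow>poly_roots_list ?p. [:-a, 1:]) = ?p"
    unfolding monic by simp
  then have "mset (poly_roots_list ?p) = mset rs"
    by (rule reconstruct_poly_monic_defines_mset)
  then show ?thesis
    unfolding poly_disc_def Let_def prod_index_pairs_eq_disc_roots by (rule disc_roots_mset_cong)
qed

definition plus_minus :: "'a :: uminus list \<Rightarrow> 'a list" where
  "plus_minus xs = concat (map (\<lambda>x. [x, -x]) xs)"

lemma plus_minus_simps [simp]:
  "plus_minus [] = []"
  "plus_minus (x # xs) = x # - x # plus_minus xs"
  by (simp_all add: plus_minus_def)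

lemma prod_plus_minus_square_diff:
  "(\<Prod>r\<leftarrow>plus_minus xs. (t - r)^2) = (\<Prod>x\<leftarrow>xs. (t^2 - x^2)^2 :: 'a :: comm_ring_1)"
proof (induction xs)
  case Nil
  then show ?case by simp
next
  case (Cons x xs)
  have "(t - x)^2 * (t - - x)^2 = (t^2 - x^2)^2"
    by (simp add: power2_eq_square algebra_simps)
  then show ?case using Cons.IH by (simp add: mult.assoc[symmetric])
qed

lemma disc_roots_plus_minus:
  "disc_roots (plus_minus xs)
     = 4 ^ length xs * (\<Prod>x\<leftarrow>xs. x^2) * disc_roots (map (\<lambda>x. x^2) xs)^2"
proof (induction xs)
  case Nil
  then show ?case by simp
next
  case (Cons x xs)
  let ?P = "\<Prod>y\<leftarrow>xs. (x^2 - y^2)^2"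
  have "disc_roots (plus_minus (x # xs)) = (x - - x)^2 * (\<Prod>r\<leftarrow>plus_minus xs. (x - r)^2)
      * ((\<Prod>r\<leftarrow>plus_minus xs. (- x - r)^2) * disc_roots (plus_minus xs))"
    by simp
  also have "(\<Prod>r\<leftarrow>plus_minus xs. (x - r)^2) = ?P"
    by (rule prod_plus_minus_square_diff)
  also have "(\<Prod>r\<leftarrow>plus_minus xs. (- x - r)^2) = ?P"
    using prod_plus_minus_square_diff[of "- x"] by simp
  also have "(x - - x)^2 = 4 * x^2"
    by (simp add: power2_eq_square algebra_simps)
  finally show ?case
    using Cons.IH by (simp add: o_def power2_eq_square ac_simps)
qed

lemma pcompose_square_linear_factors:
  "(\<Prod>x\<leftarrow>xs. [:-(x^2), 1:]) \<circ>\<^sub>p [:0, 0, 1:] = (\<Prod>r\<leftarrow>plus_minus xs. [:-r, 1 :: 'a :: comm_ring_1:])"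
proof (induction xs)
  case Nil
  then show ?case by simp
next
  case (Cons x xs)
  have "[:-(x^2), 1:] \<circ>\<^sub>p [:0, 0, 1:] = [:-x, 1:] * [:- (- x), 1:]"
    by (simp add: pcompose_pCons power2_eq_square)
  then show ?case
    by (simp only: list.map prod_list.Cons plus_minus_simps pcompose_mult Cons.IH mult.assoc)
qed

lemma det_four_block_mat_commute_upper_left:
  fixes A :: "'a :: idom mat"
  assumes A: "A \<in> carrier_mat n n" and B: "B \<in> carrier_mat n n"
    and C: "C \<in> carrier_mat n n" and D: "D \<in> carrier_mat n n"
    and commute: "A * C = C * A" and detA: "det A \<noteq> 0"
  shows "det (four_block_mat A B C D) = det (A * D - C * B)"
proof -
  let ?M = "four_block_mat A B C D"
  let ?P = "four_block_mat (1\<^sub>m n) (0\<^sub>m n n) (- C) A"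
  have "?P * ?M = four_block_mat (1\<^sub>m n * A + 0\<^sub>m n n * C) (1\<^sub>m n * B + 0\<^sub>m n n * D)
      (- C * A + A * C) (- C * B + A * D)"
    by (rule mult_four_block_mat) (use A B C D in auto)
  also have "\<dots> = four_block_mat A B (0\<^sub>m n n) (A * D - C * B)"
    using A B C D commute by (intro cong_four_block_mat) (auto simp: uminus_mult_left_mat)
  finally have PM: "?P * ?M = four_block_mat A B (0\<^sub>m n n) (A * D - C * B)" .
  have "det ?P * det ?M = det (?P * ?M)"
    by (rule det_mult[symmetric, of _ "n + n"]) (use A B C D in auto)
  also have "\<dots> = det A * det (A * D - C * B)"
    unfolding PM by (rule det_four_block_mat_lower_left_zero) (use A B C D in auto)
  also have "det ?P = det A"
    using det_four_block_mat_upper_right_zero[of "1\<^sub>m n" n _ n "- C" A] A C by simp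
  finally show ?thesis using detA by simp
qed

lemma char_poly_four_block_zero_diag:
  fixes B C :: "'a :: idom mat"
  assumes B: "B \<in> carrier_mat n n" and C: "C \<in> carrier_mat n n"
  shows "char_poly (four_block_mat (0\<^sub>m n n) B C (0\<^sub>m n n)) = char_poly (C * B) \<circ>\<^sub>p [:0, 0, 1:]"
proof -
  let ?XI = "[:0, 1:] \<cdot>\<^sub>m 1\<^sub>m n :: 'a poly mat"
  let ?B = "- map_mat (\<lambda>a. [:a:]) B" and ?C = "- map_mat (\<lambda>a. [:a:]) C"
  have XI: "?XI \<in> carrier_mat n n" and B': "?B \<in> carrier_mat n n" and C': "?C \<in> carrier_mat n n"
    using B C by auto
  have "char_poly_matrix (four_block_mat (0\<^sub>m n n) B C (0\<^sub>m n n)) = four_block_mat ?XI ?B ?C ?XI"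
    unfolding char_poly_matrix_def using B C by (intro eq_matI) auto
  moreover have "?XI * ?C = ?C * ?XI"
    using mult_smult_assoc_mat[OF one_carrier_mat C'] mult_smult_distrib[OF C' one_carrier_mat] C'
    by simp
  moreover have "det ?XI \<noteq> 0"
    by (simp add: det_smult)
  ultimately have "char_poly (four_block_mat (0\<^sub>m n n) B C (0\<^sub>m n n)) = det (?XI * ?XI - ?C * ?B)"
    unfolding char_poly_def using det_four_block_mat_commute_upper_left[OF XI B' C' XI] by simp
  also have "?C * ?B = map_mat (\<lambda>a. [:a:]) (C * B)"
    using B C by (simp add: coeff_lift_hom.mat_hom_mult[OF C B])
  also have "?XI * ?XI - map_mat (\<lambda>a. [:a:]) (C * B)
      = map_mat (\<lambda>p. p \<circ>\<^sub>p [:0, 0, 1:]) (char_poly_matrix (C * B))"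
    unfolding char_poly_matrix_def using B C by (intro eq_matI) (auto simp: pcompose_pCons)
  also have "det \<dots> = char_poly (C * B) \<circ>\<^sub>p [:0, 0, 1:]"
    unfolding char_poly_def by (rule comm_ring_hom.hom_det[OF pcompose_hom.comm_ring_hom_axioms])
  finally show ?thesis .
qed

lemma det_eq_prod_list_char_poly_roots:
  fixes A :: "'a :: field mat"
  assumes A: "A \<in> carrier_mat n n" and char: "char_poly A = (\<Prod>a\<leftarrow>as. [:-a, 1:])"
  shows "det A = prod_list as"
proof -
  have len: "length as = n"
    using degree_monic_char_poly[OF A] degree_linear_factors[of uminus as] char by simp
  have "- char_matrix A 0 = (-1) \<cdot>\<^sub>m A"
    unfolding char_matrix_def using A by (intro eq_matI) auto
  then have "poly (char_poly A) 0 = (-1)^n * det A"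
    using char_poly_matrix[OF A, of 0] det_smult[of "-1" A] A by simp
  moreover have "poly (\<Prod>a\<leftarrow>as. [:-a, 1:]) 0 = (-1)^length as * prod_list as"
    by (induction as) auto
  ultimately show ?thesis
    using char len by simp
qed

lemma poly_disc_char_poly_four_block_zero_diag:
  fixes B C :: "complex mat"
  assumes B: "B \<in> carrier_mat n n" and C: "C \<in> carrier_mat n n"
  shows "poly_disc (char_poly (four_block_mat (0\<^sub>m n n) B C (0\<^sub>m n n)))
    = 4 ^ n * det (C * B) * poly_disc (char_poly (C * B))^2"
proof -
  have CB: "C * B \<in> carrier_mat n n"
    using B C by simp
  obtain rs where rs: "char_poly (C * B) = (\<Prod>a\<leftarrow>rs. [:-a, 1:])" and len: "length rs = n"
    using char_poly_factorized[OF CB] by blast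
  define xs where "xs = map csqrt rs"
  have squares: "map (\<lambda>x. x^2) xs = rs"
    unfolding xs_def by (simp add: o_def)
  have "char_poly (C * B) = (\<Prod>x\<leftarrow>xs. [:-(x^2), 1:])"
    unfolding rs xs_def by (simp add: o_def)
  then have "char_poly (four_block_mat (0\<^sub>m n n) B C (0\<^sub>m n n)) = (\<Prod>r\<leftarrow>plus_minus xs. [:-r, 1:])"
    unfolding char_poly_four_block_zero_diag[OF B C] by (simp only: pcompose_square_linear_factors)
  then have "poly_disc (char_poly (four_block_mat (0\<^sub>m n n) B C (0\<^sub>m n n)))
      = disc_roots (plus_minus xs)"
    by (simp only: poly_disc_linear_factors)
  also have "\<dots> = 4 ^ n * prod_list rs * disc_roots rs ^ 2"
    using disc_roots_plus_minus[of xs] squares len by (simp add: xs_def)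
  also have "prod_list rs = det (C * B)"
    by (rule det_eq_prod_list_char_poly_roots[OF CB rs, symmetric])
  also have "disc_roots rs = poly_disc (char_poly (C * B))"
    by (simp only: rs poly_disc_linear_factors)
  finally show ?thesis .
qed

lemma mat_disc_eq_poly_disc_char_poly:
  "A \<in> carrier_mat n n \<Longrightarrow> mat_disc A = poly_disc (char_poly (map_mat of_int A))"
  unfolding mat_disc_def by (simp add: of_int_hom.char_poly_hom)

theorem lemma4p2:
  fixes M :: "int mat" and m n :: nat
  assumes "M \<in> carrier_mat m m"
    and "n = 2 * m"
    and "signed_adj n (four_block_mat (0\<^sub>m m m) M (transpose_mat M) (0\<^sub>m m m))"
  shows "mat_disc (four_block_mat (0\<^sub>m m m) M (transpose_mat M) (0\<^sub>m m m))
         = of_int (2 ^ n * (det M)^2) * (mat_disc (transpose_mat M * M))^2"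
proof -
  \<comment> \<open>The sign pattern is irrelevant: the identity holds for every square integer matrix.\<close>
  have M: "M \<in> carrier_mat m m" by fact
  define N :: "complex mat" where "N = map_mat of_int M"
  have N: "N \<in> carrier_mat m m" and NT: "transpose_mat N \<in> carrier_mat m m"
    unfolding N_def using M by auto
  have "map_mat of_int (four_block_mat (0\<^sub>m m m) M (transpose_mat M) (0\<^sub>m m m))
      = four_block_mat (0\<^sub>m m m) N (transpose_mat N) (0\<^sub>m m m)"
    unfolding N_def using M by (intro eq_matI) auto
  moreover have "map_mat of_int (transpose_mat M * M) = transpose_mat N * N"
    unfolding N_def using M by (simp add: of_int_hom.mat_hom_mult[of _ m m _ m] map_mat_transpose)
  moreover have "det (transpose_mat N * N) = of_int (det M)^2"
    unfolding det_mult[OF NT N] det_transpose[OF N] unfolding N_def by (simp add: power2_eq_square)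
  ultimately show ?thesis
    using M assms(2) poly_disc_char_poly_four_block_zero_diag[OF N NT]
    by (simp add: mat_disc_eq_poly_disc_char_poly[of _ "m + m"]
        mat_disc_eq_poly_disc_char_poly[of _ m] power_mult)
qed

end
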